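(* Let $\beta$ be any real number and let $\alpha>\frac{1+\sqrt{33}}{2}$. Then there exists $N$ such that for every integer $n\geqslant N$ the polynomial $\phi_n^{(\alpha,\beta)}(\mu)$ has at least one non-real zero.
   Context: For real $a$ and integer $m\geqslant0$, $(a)_m=a(a+1)\cdots(a+m-1)$, $(a)_0=1$. For real $\alpha>-1$ and real $\beta$, $$\phi_n^{(\alpha,\beta)}(\mu)=\frac{(\alpha+1)_n}{n!}\sum_{k=0}^{[n/2]}\frac{(-n)_{2k}(n+\alpha+\beta+1)_{2k}}{(\alpha+1)_{2k}}\Big(\frac{\mu}{4}\Big)^k,$$ which equals $\sum_{k=0}^{[n/2]}\big(\tfrac{d^{2k}}{dx^{2k}}P_n^{(\alpha,\beta)}(x)\big)\big|_{x=1}\mu^k$ for the Jacobi polynomial $P_n^{(\alpha,\beta)}$; here $[a]$ denotes the integer part of $a$. *)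

theory Defs
  imports "HOL-Analysis.Analysis" "HOL-Computational_Algebra.Polynomial"
begin

definition phi_coeff :: "real \<Rightarrow> real \<Rightarrow> nat \<Rightarrow> nat \<Rightarrow> real" where
  "phi_coeff \<alpha> \<beta> n k =
     pochhammer (\<alpha> + 1) n / fact n *
     (pochhammer (- real n) (2*k) * pochhammer (real n + \<alpha> + \<beta> + 1) (2*k)
        / pochhammer (\<alpha> + 1) (2*k)) * (1/4) ^ k"

definition phi_poly :: "real \<Rightarrow> real \<Rightarrow> nat \<Rightarrow> real poly" where
  "phi_poly \<alpha> \<beta> n = (\<Sum>k\<le>n div 2. monom (phi_coeff \<alpha> \<beta> n k) k)"

end

theory Submission
  imports Defs "HOL-Computational_Algebra.Fundamental_Theorem_Algebra"
begin

text \<open>If all roots of a real polynomial are real, its low coefficients satisfy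
  \<open>2 a\<^sub>0 a\<^sub>2 \<le> a\<^sub>1\<^sup>2\<close>: multiplying by a linear factor \<open>a + b x\<close> turns
  \<open>a\<^sub>1\<^sup>2 - 2 a\<^sub>0 a\<^sub>2\<close> into \<open>a\<^sup>2 (a\<^sub>1\<^sup>2 - 2 a\<^sub>0 a\<^sub>2) + b\<^sup>2 a\<^sub>0\<^sup>2\<close>.
  For \<open>\<phi>\<^sub>n\<close> the ratio \<open>2 a\<^sub>0 a\<^sub>2 / a\<^sub>1\<^sup>2\<close> tends to
  \<open>2 (\<alpha>+1)(\<alpha>+2) / ((\<alpha>+3)(\<alpha>+4))\<close> as \<open>n \<rightarrow> \<infinity>\<close>, which exceeds \<open>1\<close> exactly when
  \<open>\<alpha>\<^sup>2 - \<alpha> - 8 > 0\<close>, i.e. \<open>\<alpha> > (1 + \<surd>33)/2\<close>; so for large \<open>n\<close> the inequality fails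
  and \<open>\<phi>\<^sub>n\<close> must have a non-real root.\<close>

lemma newton_ineq_mult_linear:
  fixes q :: "'a::linordered_idom poly"
  assumes "2 * coeff q 0 * coeff q 2 \<le> (coeff q 1)^2"
  shows "2 * coeff ([:a, b:] * q) 0 * coeff ([:a, b:] * q) 2 \<le> (coeff ([:a, b:] * q) 1)^2"
proof -
  have c1: "coeff ([:a, b:] * q) 1 = a * coeff q 1 + b * coeff q 0"
    by (simp add: coeff_pCons split: nat.split)
  have c2: "coeff ([:a, b:] * q) 2 = a * coeff q 2 + b * coeff q 1"
    by (simp add: coeff_pCons numeral_2_eq_2)
  have "(coeff ([:a, b:] * q) 1)^2 - 2 * coeff ([:a, b:] * q) 0 * coeff ([:a, b:] * q) 2
        = a^2 * ((coeff q 1)^2 - 2 * coeff q 0 * coeff q 2) + (b * coeff q 0)^2"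
    unfolding c1 c2 by (simp add: power2_eq_square algebra_simps)
  also have "\<dots> \<ge> 0" using assms by simp
  finally show ?thesis by simp
qed

lemma map_poly_of_real_mult:
  "map_poly (of_real :: real \<Rightarrow> 'a::{real_algebra_1,comm_ring_1}) (p * q)
     = map_poly of_real p * map_poly of_real q"
  by (rule poly_eqI) (simp add: coeff_mult coeff_map_poly)

lemma poly_map_poly_of_real:
  "poly (map_poly (of_real :: real \<Rightarrow> 'a::{real_algebra_1,comm_ring_1}) p) (of_real x) = of_real (poly p x)"
  by (simp add: poly_altdef degree_map_poly coeff_map_poly)

lemma real_rooted_newton_ineq:
  fixes p :: "real poly"
  assumes "\<And>z. poly (map_poly complex_of_real p) z = 0 \<Longrightarrow> Im z = 0"
  shows "2 * coeff p 0 * coeff p 2 \<le> (coeff p 1)^2"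
  using assms
proof (induction "degree p" arbitrary: p)
  case 0
  then obtain c where "p = [:c:]" by (metis degree_eq_zeroE)
  then show ?case by (simp add: numeral_2_eq_2)
next
  case (Suc d)
  have "\<not> constant (poly (map_poly complex_of_real p))"
    using Suc.hyps(2) by (simp add: constant_degree degree_map_poly)
  then obtain z where z: "poly (map_poly complex_of_real p) z = 0"
    using fundamental_theorem_of_algebra by blast
  have "z = of_real (Re z)" using Suc.prems[OF z] by (simp add: complex_eq_iff)
  with z have "poly p (Re z) = 0" by (metis of_real_eq_0_iff poly_map_poly_of_real)
  then obtain q where p: "p = [:- Re z, 1:] * q" by (auto simp: poly_eq_0_iff_dvd elim: dvdE)
  have "degree q = d"
    using Suc.hyps(2) p by (cases "q = 0") (auto simp del: mult_pCons_left simp add: degree_mult_eq)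
  moreover have "Im w = 0" if "poly (map_poly complex_of_real q) w = 0" for w
    using Suc.prems[of w] that by (simp del: mult_pCons_left add: p map_poly_of_real_mult map_poly_pCons)
  ultimately have "2 * coeff q 0 * coeff q 2 \<le> (coeff q 1)^2" using Suc.hyps(1) by blast
  then show ?case unfolding p by (rule newton_ineq_mult_linear)
qed

lemma pochhammer_2: "pochhammer a 2 = a * (a + 1)"
  by (simp add: pochhammer_Suc numeral_2_eq_2)

lemma pochhammer_4: "pochhammer a 4 = a * (a + 1) * (a + 2) * (a + 3)"
  by (simp add: pochhammer_Suc eval_nat_numeral algebra_simps)

lemma coeff_phi_poly:
  assumes "k \<le> n div 2"
  shows "coeff (phi_poly \<alpha> \<beta> n) k = phi_coeff \<alpha> \<beta> n k"
  using assms by (simp add: phi_poly_def coeff_sum coeff_monom)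

lemma phi_coeff_1:
  "phi_coeff \<alpha> \<beta> n 1 = phi_coeff \<alpha> \<beta> n 0 *
     (real n * (real n - 1) * M * (M + 1)) / (4 * ((\<alpha> + 1) * (\<alpha> + 2)))"
  if "M = real n + \<alpha> + \<beta> + 1"
  using that by (simp only: phi_coeff_def mult_1_right pochhammer_2) (simp add: field_simps)

lemma phi_coeff_2:
  "phi_coeff \<alpha> \<beta> n 2 = phi_coeff \<alpha> \<beta> n 0 *
     (real n * (real n - 1) * (real n - 2) * (real n - 3) * M * (M + 1) * (M + 2) * (M + 3))
       / (16 * ((\<alpha> + 1) * (\<alpha> + 2) * (\<alpha> + 3) * (\<alpha> + 4)))"
  if "M = real n + \<alpha> + \<beta> + 1"
  using that by (simp only: phi_coeff_def mult_2_right numeral_Bit0[symmetric] pochhammer_4) (simp add: field_simps)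

text \<open>With \<open>x = n\<close>, \<open>M = n + \<alpha> + \<beta> + 1\<close>, \<open>E = (\<alpha>+3)(\<alpha>+4)\<close> and
  \<open>E + D = 2(\<alpha>+1)(\<alpha>+2)\<close>, this is \<open>a\<^sub>1\<^sup>2 < 2 a\<^sub>0 a\<^sub>2\<close> for \<open>\<phi>\<^sub>n\<close> after
  cancelling common positive factors.\<close>

lemma shifted_products_less:
  fixes x M D E :: real
  assumes "D > 0" "E > 0" "M > 0" "4 * E + 5 * D < x * D"
  shows "x * (x - 1) * M * (M + 1) * E < (x - 2) * (x - 3) * (M + 2) * (M + 3) * (E + D)"
proof -
  have "5 * D < x * D" using assms by linarith
  hence x: "x > 5" using \<open>D > 0\<close> by simp
  have xE: "x * (x - 1) * E < (x - 2) * (x - 3) * (E + D)"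
  proof -
    have "0 < x * (x * D - 4 * E - 5 * D) + 6 * (E + D)"
      using assms x by (intro add_pos_pos mult_pos_pos) auto
    thus ?thesis by (simp add: algebra_simps)
  qed
  have "M * (M + 1) < (M + 2) * (M + 3)" using assms by (simp add: algebra_simps)
  with xE have "(x * (x - 1) * E) * (M * (M + 1)) < ((x - 2) * (x - 3) * (E + D)) * ((M + 2) * (M + 3))"
    by (rule mult_strict_mono) (use assms x in auto)
  thus ?thesis by (simp add: algebra_simps)
qed

lemma phi_coeff_newton_violated:
  fixes \<alpha> \<beta> :: real
  assumes "\<alpha> > -1" and D_pos: "\<alpha>^2 - \<alpha> - 8 > 0"
    and n_large: "4 * ((\<alpha> + 3) * (\<alpha> + 4)) + 5 * (\<alpha>^2 - \<alpha> - 8) < real n * (\<alpha>^2 - \<alpha> - 8)"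
    and M_pos: "real n + \<alpha> + \<beta> + 1 > 0"
  shows "(phi_coeff \<alpha> \<beta> n 1)^2 < 2 * phi_coeff \<alpha> \<beta> n 0 * phi_coeff \<alpha> \<beta> n 2"
proof -
  define x M where "x = real n" and "M = real n + \<alpha> + \<beta> + 1"
  define P E where "P = (\<alpha> + 1) * (\<alpha> + 2)" and "E = (\<alpha> + 3) * (\<alpha> + 4)"
  define G H where "G = x * (x - 1) * M * (M + 1)" and "H = (x - 2) * (x - 3) * (M + 2) * (M + 3)"
  define C where "C = phi_coeff \<alpha> \<beta> n 0"
  have P: "P > 0" and E: "E > 0" using \<open>\<alpha> > -1\<close> by (simp_all add: P_def E_def)
  have "5 * (\<alpha>^2 - \<alpha> - 8) < x * (\<alpha>^2 - \<alpha> - 8)"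
    using n_large E unfolding x_def E_def by linarith
  hence "x > 5" using D_pos by (meson mult_right_less_imp_less less_imp_le)
  hence "G > 0" using M_pos by (simp add: G_def M_def)
  have "C > 0" using \<open>\<alpha> > -1\<close> by (simp add: C_def phi_coeff_def pochhammer_pos)
  have ED: "E + (\<alpha>^2 - \<alpha> - 8) = 2 * P" by (simp add: E_def P_def power2_eq_square algebra_simps)
  have "G * E < H * (E + (\<alpha>^2 - \<alpha> - 8))"
    unfolding G_def H_def mult.assoc[symmetric]
    using D_pos E M_pos n_large by (intro shifted_products_less) (simp_all add: x_def M_def E_def)
  hence GH: "G * E < 2 * P * H" unfolding ED by (simp add: mult.commute)
  have c1: "phi_coeff \<alpha> \<beta> n 1 = C * G / (4 * P)"
    unfolding phi_coeff_1[OF M_def] by (simp add: C_def G_def x_def P_def)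
  have c2: "phi_coeff \<alpha> \<beta> n 2 = C * G * H / (16 * P * E)"
    unfolding phi_coeff_2[OF M_def] by (simp add: C_def G_def H_def x_def P_def E_def mult.assoc)
  have "(phi_coeff \<alpha> \<beta> n 1)^2 = C^2 * G * (G * E) / (16 * P^2 * E)"
    unfolding c1 using E P by (simp add: field_simps power2_eq_square)
  also have "\<dots> < C^2 * G * (2 * P * H) / (16 * P^2 * E)"
    using GH \<open>C > 0\<close> \<open>G > 0\<close> E P by (intro divide_strict_right_mono mult_strict_left_mono) auto
  also have "\<dots> = 2 * C * phi_coeff \<alpha> \<beta> n 2"
    unfolding c2 using E P by (simp add: field_simps power2_eq_square)
  finally show ?thesis unfolding C_def .
qed

lemma gt_larger_root_x2_minus_x_minus_8:
  fixes \<alpha> :: real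
  assumes "\<alpha> > (1 + sqrt 33) / 2"
  shows "\<alpha>^2 - \<alpha> - 8 > 0" and "\<alpha> > -1"
proof -
  have "2 * \<alpha> - 1 > sqrt 33" using assms by (simp add: field_simps)
  moreover have "sqrt 33 > 0" by simp
  ultimately have "(2 * \<alpha> - 1)^2 > (sqrt 33)^2" by (intro power_strict_mono) auto
  thus "\<alpha>^2 - \<alpha> - 8 > 0" by (simp add: power2_eq_square algebra_simps)
  show "\<alpha> > -1" using \<open>2 * \<alpha> - 1 > sqrt 33\<close> \<open>sqrt 33 > 0\<close> by linarith
qed

theorem mainTheorem14:
  fixes \<alpha> \<beta> :: real
  assumes "\<alpha> > (1 + sqrt 33) / 2"
  shows "\<exists>N::nat. \<forall>n\<ge>N. \<exists>z::complex.
           poly (map_poly complex_of_real (phi_poly \<alpha> \<beta> n)) z = 0 \<and> Im z \<noteq> 0"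
proof -
  define D where "D = \<alpha>^2 - \<alpha> - 8"
  have "D > 0" and "\<alpha> > -1"
    unfolding D_def using gt_larger_root_x2_minus_x_minus_8[OF assms] by auto
  have "\<forall>\<^sub>F n in sequentially. real n > (4 * ((\<alpha> + 3) * (\<alpha> + 4)) + 5 * D) / D
                              \<and> real n > - (\<alpha> + \<beta> + 1) \<and> real n > 4"
    using filterlim_real_sequentially unfolding filterlim_at_top_dense by (intro eventually_conj) auto
  hence "\<forall>\<^sub>F n in sequentially. \<exists>z. poly (map_poly complex_of_real (phi_poly \<alpha> \<beta> n)) z = 0 \<and> Im z \<noteq> 0"
  proof eventually_elim
    case (elim n)
    have "(phi_coeff \<alpha> \<beta> n 1)^2 < 2 * phi_coeff \<alpha> \<beta> n 0 * phi_coeff \<alpha> \<beta> n 2"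
      using elim \<open>D > 0\<close> \<open>\<alpha> > -1\<close>
      by (intro phi_coeff_newton_violated) (auto simp: D_def pos_divide_less_eq mult.commute)
    moreover have "n \<ge> 4" using elim by linarith
    ultimately have "\<not> 2 * coeff (phi_poly \<alpha> \<beta> n) 0 * coeff (phi_poly \<alpha> \<beta> n) 2
                        \<le> (coeff (phi_poly \<alpha> \<beta> n) 1)^2"
      by (simp add: coeff_phi_poly)
    thus ?case using real_rooted_newton_ineq by blast
  qed
  thus ?thesis by (simp add: eventually_sequentially)
qed

end
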